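(* Let $\sigma$ be a signature containing $\triangleright$, let $\mathcal{A}$ be a $\sigma$-algebra and let $\theta$ be a representation of $\mathcal{A}$ by partial functions. If $\theta$ is locally complete, then $\theta$ is join complete.
   Context: Signatures $\sigma$ are sets of operation symbols drawn from: $\triangleright$ (antidomain restriction), $;$ (composition), $\wedge$ (intersection), $\mathrm{upd}$ (update), $\sqcup$ (preferential union), $\mathsf{D}$ (domain), $\mathsf{A}$ (antidomain), interpreted on partial functions as: $f \triangleright g = \{(x,y) \in g : x \notin \mathrm{dom}(f)\}$; $f;g$ = relational composition ($f$ first); $f\wedge g = f\cap g$; $\mathrm{upd}(f,g)(x)$ is $f(x)$ if $f(x)$ defined and $g(x)$ undefined, $g(x)$ if both defined, undefined otherwise; $(f\sqcup g)(x)$ is $f(x)$ if defined, else $g(x)$; $\mathsf{D}(f)$ = identity on $\mathrm{dom}(f)$; $\mathsf{A}(f)$ = identity on the complement of $\mathrm{dom}(f)$ in the base. A representation by partial functions is an isomorphism onto a $\sigma$-algebra of partial functions with these operations. Define $0 := a\triangleright a$, $a\lhd b := (a\triangleright b)\triangleright b$, $a \le b :\iff a\lhd b = a$; for representable algebras this is a partial order and $a\le b \iff \theta(a)\subseteq\theta(b)$ for any representation $\theta$. For representable $\mathcal{A}$ and $a\in\mathcal{A}$, ${\downarrow}a=\{b : b\le a\}$ is a Boolean algebra with bottom $0$, top $a$, meet $\lhd$ and complement $b\mapsto b\triangleright a$, and $\theta$ restricts to a representation of it as a field of sets over $\theta(a)$. $\theta$ is locally complete if for every $a$ this restriction is a complete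 representation of ${\downarrow}a$ (preserves all existing joins as unions and existing meets of nonempty sets as intersections). $\theta$ is join complete if for every $S \subseteq \mathcal{A}$ with $\bigvee S$ existing in $(\mathcal{A},\le)$, $\theta(\bigvee S)=\bigcup\theta[S]$. *)

theory Defs
  imports Main
begin

datatype opsym = Restr | Comp | Meet | Upd | PrefUnion | Dom | Antidom

definition unary_sym :: "opsym \<Rightarrow> bool" where
  "unary_sym s \<longleftrightarrow> s = Dom \<or> s = Antidom"

definition sig_algebra ::
  "opsym set \<Rightarrow> 'a set \<Rightarrow> (opsym \<Rightarrow> 'a \<Rightarrow> 'a \<Rightarrow> 'a) \<Rightarrow> (opsym \<Rightarrow> 'a \<Rightarrow> 'a) \<Rightarrow> bool" where
  "sig_algebra \<sigma> A bop uop \<longleftrightarrow>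
     (\<forall>s\<in>\<sigma>. \<not> unary_sym s \<longrightarrow> (\<forall>a\<in>A. \<forall>b\<in>A. bop s a b \<in> A)) \<and>
     (\<forall>s\<in>\<sigma>. unary_sym s \<longrightarrow> (\<forall>a\<in>A. uop s a \<in> A))"

definition partial_fun_on :: "'b set \<Rightarrow> ('b \<times> 'b) set \<Rightarrow> bool" where
  "partial_fun_on X f \<longleftrightarrow> single_valued f \<and> f \<subseteq> X \<times> X"

fun pf_bin :: "opsym \<Rightarrow> ('b \<times> 'b) set \<Rightarrow> ('b \<times> 'b) set \<Rightarrow> ('b \<times> 'b) set" where
  "pf_bin Restr f g = {(x, y) \<in> g. x \<notin> Domain f}"
| "pf_bin Comp f g = f O g"
| "pf_bin Meet f g = f \<inter> g"
| "pf_bin Upd f g = {(x, y) \<in> f. x \<notin> Domain g} \<union> {(x, y) \<in> g. x \<in> Domain f}"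
| "pf_bin PrefUnion f g = f \<union> {(x, y) \<in> g. x \<notin> Domain f}"
| "pf_bin Dom f g = undefined"
| "pf_bin Antidom f g = undefined"

fun pf_un :: "'b set \<Rightarrow> opsym \<Rightarrow> ('b \<times> 'b) set \<Rightarrow> ('b \<times> 'b) set" where
  "pf_un X Dom f = Id_on (Domain f)"
| "pf_un X Antidom f = Id_on (X - Domain f)"
| "pf_un X s f = undefined"

definition pf_representation ::
  "opsym set \<Rightarrow> 'a set \<Rightarrow> (opsym \<Rightarrow> 'a \<Rightarrow> 'a \<Rightarrow> 'a) \<Rightarrow> (opsym \<Rightarrow> 'a \<Rightarrow> 'a)
    \<Rightarrow> 'b set \<Rightarrow> ('a \<Rightarrow> ('b \<times> 'b) set) \<Rightarrow> bool" where
  "pf_representation \<sigma> A bop uop X \<theta> \<longleftrightarrow>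
     inj_on \<theta> A \<and> (\<forall>a\<in>A. partial_fun_on X (\<theta> a)) \<and>
     (\<forall>s\<in>\<sigma>. \<not> unary_sym s \<longrightarrow> (\<forall>a\<in>A. \<forall>b\<in>A. \<theta> (bop s a b) = pf_bin s (\<theta> a) (\<theta> b))) \<and>
     (\<forall>s\<in>\<sigma>. unary_sym s \<longrightarrow> (\<forall>a\<in>A. \<theta> (uop s a) = pf_un X s (\<theta> a)))"

definition alg_le :: "(opsym \<Rightarrow> 'a \<Rightarrow> 'a \<Rightarrow> 'a) \<Rightarrow> 'a \<Rightarrow> 'a \<Rightarrow> bool" where
  "alg_le bop a b \<longleftrightarrow> bop Restr (bop Restr a b) b = a"

definition down_set :: "'a set \<Rightarrow> (opsym \<Rightarrow> 'a \<Rightarrow> 'a \<Rightarrow> 'a) \<Rightarrow> 'a \<Rightarrow> 'a set" where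
  "down_set A bop a = {b \<in> A. alg_le bop b a}"

definition is_lub_in :: "'a set \<Rightarrow> ('a \<Rightarrow> 'a \<Rightarrow> bool) \<Rightarrow> 'a set \<Rightarrow> 'a \<Rightarrow> bool" where
  "is_lub_in B le S j \<longleftrightarrow> j \<in> B \<and> (\<forall>s\<in>S. le s j) \<and> (\<forall>u\<in>B. (\<forall>s\<in>S. le s u) \<longrightarrow> le j u)"

definition is_glb_in :: "'a set \<Rightarrow> ('a \<Rightarrow> 'a \<Rightarrow> bool) \<Rightarrow> 'a set \<Rightarrow> 'a \<Rightarrow> bool" where
  "is_glb_in B le S m \<longleftrightarrow> m \<in> B \<and> (\<forall>s\<in>S. le m s) \<and> (\<forall>u\<in>B. (\<forall>s\<in>S. le u s) \<longrightarrow> le u m)"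

definition locally_complete ::
  "'a set \<Rightarrow> (opsym \<Rightarrow> 'a \<Rightarrow> 'a \<Rightarrow> 'a) \<Rightarrow> ('a \<Rightarrow> ('b \<times> 'b) set) \<Rightarrow> bool" where
  "locally_complete A bop \<theta> \<longleftrightarrow>
     (\<forall>a\<in>A. \<forall>S \<subseteq> down_set A bop a.
        (\<forall>j. is_lub_in (down_set A bop a) (alg_le bop) S j \<longrightarrow> \<theta> j = \<Union> (\<theta> ` S)) \<and>
        (S \<noteq> {} \<longrightarrow> (\<forall>m. is_glb_in (down_set A bop a) (alg_le bop) S m \<longrightarrow> \<theta> m = \<Inter> (\<theta> ` S))))"

definition join_complete ::
  "'a set \<Rightarrow> (opsym \<Rightarrow> 'a \<Rightarrow> 'a \<Rightarrow> 'a) \<Rightarrow> ('a \<Rightarrow> ('b \<times> 'b) set) \<Rightarrow> bool" where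
  "join_complete A bop \<theta> \<longleftrightarrow>
     (\<forall>S \<subseteq> A. \<forall>j. is_lub_in A (alg_le bop) S j \<longrightarrow> \<theta> j = \<Union> (\<theta> ` S))"

end

theory Submission
  imports Defs
begin

text \<open>A join of \<open>S\<close> in \<open>A\<close> is below itself, so it is also the join of \<open>S\<close> inside the
  Boolean algebra \<open>\<down>j\<close>; local completeness there gives \<open>\<theta> j = \<Union> (\<theta> ` S)\<close>.\<close>

lemma is_lub_in_subset:
  assumes "is_lub_in B le S j" and "C \<subseteq> B" and "j \<in> C" and "S \<subseteq> C"
  shows "is_lub_in C le S j"
  using assms unfolding is_lub_in_def by blast

lemma pf_representation_Restr:
  assumes "Restr \<in> \<sigma>" and "pf_representation \<sigma> A bop uop X \<theta>" and "a \<in> A" and "b \<in> A"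
  shows "\<theta> (bop Restr a b) = {(x, y) \<in> \<theta> b. x \<notin> Domain (\<theta> a)}"
  using assms by (simp add: pf_representation_def unary_sym_def)

lemma sig_algebra_Restr_closed:
  assumes "Restr \<in> \<sigma>" and "sig_algebra \<sigma> A bop uop" and "a \<in> A" and "b \<in> A"
  shows "bop Restr a b \<in> A"
  using assms by (simp add: sig_algebra_def unary_sym_def)

lemma alg_le_refl:
  assumes "Restr \<in> \<sigma>" and "sig_algebra \<sigma> A bop uop"
    and "pf_representation \<sigma> A bop uop X \<theta>" and "a \<in> A"
  shows "alg_le bop a a"
proof -
  have aa: "bop Restr a a \<in> A"
    using sig_algebra_Restr_closed[OF assms(1,2,4,4)] .
  have "\<theta> (bop Restr a a) = {}"
    using pf_representation_Restr[OF assms(1,3,4,4)] by auto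
  then have "\<theta> (bop Restr (bop Restr a a) a) = \<theta> a"
    using pf_representation_Restr[OF assms(1,3) aa assms(4)] by auto
  moreover have "bop Restr (bop Restr a a) a \<in> A"
    using sig_algebra_Restr_closed[OF assms(1,2) aa assms(4)] .
  moreover have "inj_on \<theta> A"
    using assms(3) by (simp add: pf_representation_def)
  ultimately show ?thesis
    unfolding alg_le_def using assms(4) by (auto dest: inj_onD)
qed

lemma is_lub_in_down_set:
  assumes "is_lub_in A (alg_le bop) S j" and "S \<subseteq> A" and "alg_le bop j j"
  shows "is_lub_in (down_set A bop j) (alg_le bop) S j"
proof (rule is_lub_in_subset[OF assms(1)])
  show "down_set A bop j \<subseteq> A" by (auto simp: down_set_def)
  show "j \<in> down_set A bop j" and "S \<subseteq> down_set A bop j"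
    using assms unfolding down_set_def is_lub_in_def by auto
qed

theorem lemma3p5:
  fixes \<sigma> :: "opsym set" and A :: "'a set"
    and bop :: "opsym \<Rightarrow> 'a \<Rightarrow> 'a \<Rightarrow> 'a" and uop :: "opsym \<Rightarrow> 'a \<Rightarrow> 'a"
    and X :: "'b set" and \<theta> :: "'a \<Rightarrow> ('b \<times> 'b) set"
  assumes "Restr \<in> \<sigma>"
    and "sig_algebra \<sigma> A bop uop"
    and "pf_representation \<sigma> A bop uop X \<theta>"
    and "locally_complete A bop \<theta>"
  shows "join_complete A bop \<theta>"
  unfolding join_complete_def
proof (intro allI impI)
  fix S j
  assume S: "S \<subseteq> A" and lub: "is_lub_in A (alg_le bop) S j"
  have j: "j \<in> A" using lub by (simp add: is_lub_in_def)
  have local_lub: "is_lub_in (down_set A bop j) (alg_le bop) S j"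
    using is_lub_in_down_set[OF lub S alg_le_refl[OF assms(1-3) j]] .
  moreover have "S \<subseteq> down_set A bop j"
    using local_lub S by (auto simp: is_lub_in_def down_set_def)
  ultimately show "\<theta> j = \<Union> (\<theta> ` S)"
    using assms(4) j unfolding locally_complete_def by simp
qed

end
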